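(* Let $m=2^p>2$ and let $r_1,\dots,r_m\in\{1,\dots,m\}$ (repetitions allowed). Let $A$ be the $m\times m$ matrix whose $i$-th row is the $r_i$-th row of $H(m)$. If $b(r_1-1)\oplus b(r_2-1)\oplus\dots\oplus b(r_m-1)=0$, then $\mathrm{perm}\,A\neq0$.
   Context: For $m=2^p$, the Sylvester matrix $H(m)$ is defined recursively by $H(1)=[1]$ and $H(2^p)=\begin{bmatrix}H(2^{p-1})&H(2^{p-1})\\ H(2^{p-1})&-H(2^{p-1})\end{bmatrix}$, rows and columns indexed $1,\dots,m$; equivalently $[H(m)]_{i,j}=(-1)^{b(i-1)\odot b(j-1)}$. Here $b(x)$ denotes the $p$-bit binary representation of $x\in\{0,\dots,m-1\}$, $\odot$ is the bitwise dot product and $\oplus$ is bitwise XOR. $\mathrm{perm}\,A=\sum_{\sigma\in S_m}\prod_{i=1}^m a_{i,\sigma(i)}$. *)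

theory Defs
  imports "HOL-Combinatorics.Permutations"
begin

text \<open>The i-th bit of the p-bit binary representation b(x) is bit x i, for i < p.
  Bitwise dot product of b(x) and b(y), taken mod 2 in the exponent.\<close>
definition bdot :: "nat \<Rightarrow> nat \<Rightarrow> nat \<Rightarrow> nat" where
  "bdot p x y = (\<Sum>k<p. (if bit x k \<and> bit y k then 1 else 0))"

text \<open>Sylvester matrix H(2^p), rows and columns indexed 1..2^p.\<close>
definition sylvester :: "nat \<Rightarrow> nat \<Rightarrow> nat \<Rightarrow> int" where
  "sylvester p i j = (-1) ^ bdot p (i - 1) (j - 1)"

definition perm :: "nat \<Rightarrow> (nat \<Rightarrow> nat \<Rightarrow> int) \<Rightarrow> int" where
  "perm m A = (\<Sum>\<sigma> \<in> {\<sigma>. \<sigma> permutes {1..m}}. \<Prod>i=1..m. A i (\<sigma> i))"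

definition xor_all :: "nat \<Rightarrow> (nat \<Rightarrow> nat) \<Rightarrow> nat" where
  "xor_all m r = foldr (\<lambda>i acc. xor (r i - 1) acc) [1..<m+1] 0"

end

theory Submission
  imports Defs
begin

text \<open>
  The rows of \<open>H(2^q)\<close> are the characters \<open>\<chi>\<^sub>x(y) = (-1)^(b(x)\<odot>b(y))\<close> of
  \<open>(\<int>/2)^q\<close>. Consider more generally the permanent of the matrix with rows
  \<open>\<chi>\<^bsub>X i\<^esub>\<close>, \<open>i \<in> I\<close>, and with every column of \<open>H(2^q)\<close> repeated \<open>2^s\<close> times,
  where \<open>|I| = M = 2^(s+q)\<close>. If bit \<open>k\<close> of the XOR of the labels \<open>X i\<close> is set,
  translating the columns by \<open>e\<^sub>k\<close> multiplies the permanent by \<open>-1\<close>, so it vanishes.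
  If the XOR is zero, the permanent is congruent to \<open>M!\<close> modulo \<open>2^M\<close>, by induction on
  \<open>q\<close>: a Laplace expansion along the columns with even and with odd \<open>y\<close> compares it
  with the same permanent for the labels \<open>X i div 2\<close>, \<open>q - 1\<close> bits and twice the
  multiplicity. The difference is a sum over the subsets \<open>R\<close>
  of size \<open>M/2\<close> whose terms agree for \<open>R\<close> and \<open>I - R\<close> and, by induction, are divisible
  by \<open>2 \<cdot> 2^(M/2-1) \<cdot> 2^(M/2-1)\<close>. For \<open>m = 2^p\<close> the exponent of \<open>2\<close> in \<open>m!\<close> is \<open>m - 1\<close>,
  so the permanent is nonzero.
\<close>

text \<open>Permanent of a matrix with rows indexed by \<open>I\<close> and columns by \<open>J\<close>; the bijections
  \<open>I \<rightarrow> J\<close> are taken extensional so that each is counted once.\<close>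

definition ext_bijections :: "'a set \<Rightarrow> 'b set \<Rightarrow> ('a \<Rightarrow> 'b) set" where
  "ext_bijections I J = {\<sigma> \<in> extensional I. bij_betw \<sigma> I J}"

definition permanent :: "'a set \<Rightarrow> 'b set \<Rightarrow> ('a \<Rightarrow> 'b \<Rightarrow> 'c::comm_semiring_1) \<Rightarrow> 'c" where
  "permanent I J a = (\<Sum>\<sigma>\<in>ext_bijections I J. \<Prod>i\<in>I. a i (\<sigma> i))"

lemma finite_ext_bijections: "finite I \<Longrightarrow> finite J \<Longrightarrow> finite (ext_bijections I J)"
  by (rule finite_subset[of _ "PiE I (\<lambda>_. J)"])
     (auto simp: ext_bijections_def PiE_iff bij_betw_def extensional_def intro: finite_PiE)

lemma restrict_in_ext_bijections: "bij_betw \<sigma> I J \<Longrightarrow> restrict \<sigma> I \<in> ext_bijections I J"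
  by (simp add: ext_bijections_def bij_betw_cong[of I "restrict \<sigma> I" \<sigma>])

lemma permanent_cong:
  assumes "\<And>i j. i \<in> I \<Longrightarrow> j \<in> J \<Longrightarrow> a i j = b i j"
  shows "permanent I J a = permanent I J b"
  unfolding permanent_def
proof (intro sum.cong prod.cong refl)
  fix \<sigma> i assume "\<sigma> \<in> ext_bijections I J" "i \<in> I"
  then show "a i (\<sigma> i) = b i (\<sigma> i)"
    using assms by (auto simp: ext_bijections_def bij_betw_def)
qed

lemma permanent_scale_rows:
  "permanent I J (\<lambda>i j. e i * a i j) = (\<Prod>i\<in>I. e i) * permanent I J a"
  unfolding permanent_def by (simp add: prod.distrib sum_distrib_left)

lemma permanent_reindex_cols:
  assumes \<pi>: "bij_betw \<pi> J' J"
  shows "permanent I J' (\<lambda>i j. a i (\<pi> j)) = permanent I J a"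
  unfolding permanent_def
proof (rule sum.reindex_bij_witness[where j="\<lambda>\<sigma>. restrict (\<pi> \<circ> \<sigma>) I"
      and i="\<lambda>\<tau>. restrict (inv_into J' \<pi> \<circ> \<tau>) I"])
  fix \<sigma> assume "\<sigma> \<in> ext_bijections I J'"
  then have e: "\<sigma> \<in> extensional I" and b: "bij_betw \<sigma> I J'"
    by (auto simp: ext_bijections_def)
  show "restrict (inv_into J' \<pi> \<circ> restrict (\<pi> \<circ> \<sigma>) I) I = \<sigma>"
    using e b \<pi> by (auto simp: fun_eq_iff bij_betw_def extensional_def inv_into_f_f)
  show "restrict (\<pi> \<circ> \<sigma>) I \<in> ext_bijections I J"
    using b \<pi> by (intro restrict_in_ext_bijections bij_betw_trans)
next
  fix \<tau> assume "\<tau> \<in> ext_bijections I J"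
  then have e: "\<tau> \<in> extensional I" and b: "bij_betw \<tau> I J"
    by (auto simp: ext_bijections_def)
  show "restrict (\<pi> \<circ> restrict (inv_into J' \<pi> \<circ> \<tau>) I) I = \<tau>"
    using e b \<pi> by (auto simp: fun_eq_iff bij_betw_def extensional_def f_inv_into_f)
  show "restrict (inv_into J' \<pi> \<circ> \<tau>) I \<in> ext_bijections I J'"
    using b \<pi> by (intro restrict_in_ext_bijections bij_betw_trans bij_betw_inv_into)
qed simp

lemma ext_bijections_merge:
  assumes disj: "J0 \<inter> J1 = {}" and R: "R \<subseteq> I"
    and \<sigma>0: "\<sigma>0 \<in> ext_bijections R J0" and \<sigma>1: "\<sigma>1 \<in> ext_bijections (I - R) J1"
  shows "(\<lambda>i. if i \<in> R then \<sigma>0 i else \<sigma>1 i) \<in> ext_bijections I (J0 \<union> J1)"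
    and "I \<inter> (\<lambda>i. if i \<in> R then \<sigma>0 i else \<sigma>1 i) -` J0 = R"
proof -
  let ?\<sigma> = "\<lambda>i. if i \<in> R then \<sigma>0 i else \<sigma>1 i"
  have b0: "bij_betw ?\<sigma> R J0"
    using \<sigma>0 unfolding ext_bijections_def by (auto cong: bij_betw_cong)
  have b1: "bij_betw ?\<sigma> (I - R) J1"
    using \<sigma>1 unfolding ext_bijections_def by (auto elim: bij_betw_cong[THEN iffD1, rotated])
  have "bij_betw ?\<sigma> (R \<union> (I - R)) (J0 \<union> J1)"
    using b0 b1 disj by (rule bij_betw_combine)
  moreover have "R \<union> (I - R) = I"
    using R by auto
  ultimately show "?\<sigma> \<in> ext_bijections I (J0 \<union> J1)"
    using \<sigma>0 \<sigma>1 R by (auto simp: ext_bijections_def extensional_def)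
  have "?\<sigma> ` R = J0" "?\<sigma> ` (I - R) = J1"
    using b0 b1 by (auto simp: bij_betw_def)
  then show "I \<inter> ?\<sigma> -` J0 = R"
    using R disj by blast
qed

lemma ext_bijections_restrict_preimage:
  assumes disj: "J0 \<inter> J1 = {}" and \<sigma>: "\<sigma> \<in> ext_bijections I (J0 \<union> J1)"
  shows "restrict \<sigma> (I \<inter> \<sigma> -` J0) \<in> ext_bijections (I \<inter> \<sigma> -` J0) J0"
    and "restrict \<sigma> (I - (I \<inter> \<sigma> -` J0)) \<in> ext_bijections (I - (I \<inter> \<sigma> -` J0)) J1"
proof -
  let ?R = "I \<inter> \<sigma> -` J0"
  have b: "bij_betw \<sigma> I (J0 \<union> J1)"
    using \<sigma> by (simp add: ext_bijections_def)
  then have "\<sigma> ` I = J0 \<union> J1"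
    by (simp add: bij_betw_def)
  moreover have "\<sigma> ` ?R = \<sigma> ` I \<inter> J0" "\<sigma> ` (I - ?R) = \<sigma> ` I - J0"
    by blast+
  ultimately have "\<sigma> ` ?R = J0" "\<sigma> ` (I - ?R) = J1"
    using disj by auto
  then show "restrict \<sigma> ?R \<in> ext_bijections ?R J0" "restrict \<sigma> (I - ?R) \<in> ext_bijections (I - ?R) J1"
    using b by (auto intro: restrict_in_ext_bijections bij_betw_subset)
qed

lemma bij_betw_split_ext_bijections:
  assumes disj: "J0 \<inter> J1 = {}"
  shows "bij_betw (\<lambda>(R, \<sigma>0, \<sigma>1) i. if i \<in> R then \<sigma>0 i else \<sigma>1 i)
    (SIGMA R:{R. R \<subseteq> I \<and> card R = card J0}. ext_bijections R J0 \<times> ext_bijections (I - R) J1)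
    (ext_bijections I (J0 \<union> J1))"
    (is "bij_betw ?merge ?S ?B")
proof -
  let ?split = "\<lambda>\<sigma>. (I \<inter> \<sigma> -` J0, restrict \<sigma> (I \<inter> \<sigma> -` J0), restrict \<sigma> (I - (I \<inter> \<sigma> -` J0)))"
  have merge: "?split (?merge z) = z \<and> ?merge z \<in> ?B" if "z \<in> ?S" for z
  proof -
    obtain R \<sigma>0 \<sigma>1 where z: "z = (R, \<sigma>0, \<sigma>1)" and R: "R \<subseteq> I"
      and \<sigma>0: "\<sigma>0 \<in> ext_bijections R J0" and \<sigma>1: "\<sigma>1 \<in> ext_bijections (I - R) J1"
      using \<open>z \<in> ?S\<close> by auto
    note pre = ext_bijections_merge(2)[OF disj R \<sigma>0 \<sigma>1]
    have "?split (\<lambda>i. if i \<in> R then \<sigma>0 i else \<sigma>1 i) = (R, \<sigma>0, \<sigma>1)"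
      using pre \<sigma>0 \<sigma>1 by (auto simp: ext_bijections_def extensional_def fun_eq_iff)
    with ext_bijections_merge(1)[OF disj R \<sigma>0 \<sigma>1] show ?thesis
      by (simp only: z prod.case)
  qed
  have split: "?merge (?split \<sigma>) = \<sigma> \<and> ?split \<sigma> \<in> ?S" if \<sigma>: "\<sigma> \<in> ?B" for \<sigma>
  proof -
    have "?merge (?split \<sigma>) = \<sigma>"
      using \<sigma> by (auto simp: ext_bijections_def fun_eq_iff extensional_def)
    moreover have "card (I \<inter> \<sigma> -` J0) = card J0"
      using ext_bijections_restrict_preimage(1)[OF disj \<sigma>]
      by (auto simp: ext_bijections_def dest: bij_betw_same_card)
    ultimately show ?thesis
      using ext_bijections_restrict_preimage[OF disj \<sigma>] by auto
  qed
  show ?thesis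
  proof (rule bij_betw_byWitness[where f'="?split"])
    show "\<forall>z\<in>?S. ?split (?merge z) = z" "?merge ` ?S \<subseteq> ?B"
      using merge by blast+
    show "\<forall>\<sigma>\<in>?B. ?merge (?split \<sigma>) = \<sigma>" "?split ` ?B \<subseteq> ?S"
      using split by blast+
  qed
qed

lemma permanent_split_cols:
  assumes fin: "finite I" "finite J0" "finite J1" and disj: "J0 \<inter> J1 = {}"
  shows "permanent I (J0 \<union> J1) a =
    (\<Sum>R | R \<subseteq> I \<and> card R = card J0. permanent R J0 a * permanent (I - R) J1 a)"
proof -
  let ?Rs = "{R. R \<subseteq> I \<and> card R = card J0}"
  let ?S = "SIGMA R:?Rs. ext_bijections R J0 \<times> ext_bijections (I - R) J1"
  have "(\<Sum>R\<in>?Rs. permanent R J0 a * permanent (I - R) J1 a)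
      = (\<Sum>(R, \<sigma>0, \<sigma>1)\<in>?S. (\<Prod>i\<in>R. a i (\<sigma>0 i)) * (\<Prod>i\<in>I - R. a i (\<sigma>1 i)))"
    unfolding permanent_def sum_product sum.cartesian_product
    using fin by (subst sum.Sigma) (auto intro!: finite_ext_bijections finite_subset[of _ I])
  also have "\<dots> = (\<Sum>(R, \<sigma>0, \<sigma>1)\<in>?S. \<Prod>i\<in>I. a i (if i \<in> R then \<sigma>0 i else \<sigma>1 i))"
  proof (rule sum.cong[OF refl], clarify)
    fix R \<sigma>0 \<sigma>1 assume "R \<subseteq> I"
    then have "(\<Prod>i\<in>I. a i (if i \<in> R then \<sigma>0 i else \<sigma>1 i))
        = (\<Prod>i\<in>I - R. a i (\<sigma>1 i)) * (\<Prod>i\<in>R. a i (\<sigma>0 i))"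
      using fin by (simp add: prod.subset_diff)
    then show "(\<Prod>i\<in>R. a i (\<sigma>0 i)) * (\<Prod>i\<in>I - R. a i (\<sigma>1 i))
        = (\<Prod>i\<in>I. a i (if i \<in> R then \<sigma>0 i else \<sigma>1 i))"
      by (simp add: mult.commute)
  qed
  also have "\<dots> = permanent I (J0 \<union> J1) a"
    unfolding permanent_def
    using sum.reindex_bij_betw[OF bij_betw_split_ext_bijections[OF disj, of I],
        of "\<lambda>\<sigma>. \<Prod>i\<in>I. a i (\<sigma> i)"]
    by (simp add: case_prod_beta')
  finally show ?thesis ..
qed

lemma sum_permutes_eq_permanent:
  "(\<Sum>\<sigma> | \<sigma> permutes S. \<Prod>i\<in>S. a i (\<sigma> i)) = permanent S S a"
  unfolding permanent_def
proof (rule sum.reindex_bij_witness[where j="\<lambda>\<sigma>. restrict \<sigma> S"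
      and i="\<lambda>\<tau> x. if x \<in> S then \<tau> x else x"])
  fix \<tau> assume "\<tau> \<in> ext_bijections S S"
  then have e: "\<tau> \<in> extensional S" and b: "bij_betw \<tau> S S"
    by (auto simp: ext_bijections_def)
  show "restrict (\<lambda>x. if x \<in> S then \<tau> x else x) S = \<tau>"
    using e by (auto simp: fun_eq_iff extensional_def)
  have "bij_betw (\<lambda>x. if x \<in> S then \<tau> x else x) S S"
    using b by (rule bij_betw_cong[THEN iffD1, rotated]) auto
  then show "(\<lambda>x. if x \<in> S then \<tau> x else x) \<in> {\<sigma>. \<sigma> permutes S}"
    by (auto intro: bij_imp_permutes)
qed (auto simp: fun_eq_iff permutes_def restrict_in_ext_bijections permutes_imp_bij)

lemma permanent_const_one:
  assumes "finite I" "finite J" "card I = card J"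
  shows "permanent I J (\<lambda>i j. 1) = fact (card I)"
proof -
  obtain h where h: "bij_betw h I J"
    using assms finite_same_card_bij by blast
  have "permanent I J (\<lambda>i j. 1) = permanent I I (\<lambda>i j. 1)"
    by (rule permanent_reindex_cols[OF h, symmetric])
  also have "\<dots> = (\<Sum>\<sigma> | \<sigma> permutes I. \<Prod>i\<in>I. 1)"
    by (rule sum_permutes_eq_permanent[symmetric])
  also have "\<dots> = fact (card I)"
    using assms by (simp add: card_permutations)
  finally show ?thesis .
qed

lemma fact_double_eq: "fact (2 * n) = (2::nat) ^ n * fact n * (\<Prod>i<n. 2 * i + 1)"
  by (induction n) (simp_all add: fact_Suc algebra_simps)

lemma fact_pow2_eq: "\<exists>u::int. odd u \<and> fact (2 ^ k) = 2 ^ (2 ^ k - 1) * u"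
proof -
  have "\<exists>u. odd u \<and> fact (2 ^ k) = (2::nat) ^ (2 ^ k - 1) * u"
  proof (induction k)
    case (Suc k)
    then obtain u where u: "odd u" "fact (2 ^ k) = (2::nat) ^ (2 ^ k - 1) * u"
      by blast
    have "fact (2 ^ Suc k) = (fact (2 * 2 ^ k) :: nat)"
      by simp
    also have "\<dots> = 2 ^ 2 ^ k * fact (2 ^ k) * (\<Prod>i<2 ^ k. 2 * i + 1)"
      by (rule fact_double_eq)
    also have "\<dots> = 2 ^ (2 ^ k + (2 ^ k - 1)) * (u * (\<Prod>i<2 ^ k. 2 * i + 1))"
      using u(2) by (simp only: power_add mult_ac)
    also have "2 ^ k + (2 ^ k - 1) = 2 ^ Suc k - (1::nat)"
      by simp
    finally have "fact (2 ^ Suc k) = 2 ^ (2 ^ Suc k - 1) * (u * (\<Prod>i<2 ^ k. 2 * i + (1::nat)))" .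
    moreover have "odd (u * (\<Prod>i<2 ^ k. 2 * i + (1::nat)))"
      using u(1) by (simp add: even_prod_iff)
    ultimately show ?case by blast
  qed simp
  then obtain u where "odd u" "fact (2 ^ k) = (2::nat) ^ (2 ^ k - 1) * u"
    by blast
  then show ?thesis
    by (intro exI[of _ "int u"]) (metis even_of_nat of_nat_fact of_nat_mult of_nat_numeral of_nat_power)
qed

lemma pow2_dvd_fact_pow2: "(2::int) ^ (2 ^ k - 1) dvd fact (2 ^ k)"
  using fact_pow2_eq[of k] by auto

lemma not_pow2_dvd_fact_pow2: "\<not> (2::int) ^ 2 ^ k dvd fact (2 ^ k)"
proof
  assume dvd: "(2::int) ^ 2 ^ k dvd fact (2 ^ k)"
  obtain u :: int where u: "odd u" "fact (2 ^ k) = 2 ^ (2 ^ k - 1) * u"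
    using fact_pow2_eq by blast
  have "(2::int) ^ 2 ^ k = 2 ^ (2 ^ k - 1) * 2"
    using power_Suc2[of "2::int" "2 ^ k - 1"] by simp
  with dvd u(2) have "2 dvd u"
    by simp
  with u(1) show False ..
qed

lemma pow2_dvd_if_congruent_fact_pow2:
  assumes "(2::int) ^ 2 ^ k dvd x - fact (2 ^ k)"
  shows "2 ^ (2 ^ k - 1) dvd x"
proof -
  have "(2::int) ^ (2 ^ k - 1) dvd x - fact (2 ^ k)"
    using assms by (rule dvd_trans[rotated]) (simp add: le_imp_power_dvd)
  then show ?thesis
    using pow2_dvd_fact_pow2 by (metis diff_add_cancel dvd_add)
qed

lemma dvd_sum_involution:
  fixes g :: "'a \<Rightarrow> 'b::comm_semiring_1"
  assumes "finite S"
    and "\<And>x. x \<in> S \<Longrightarrow> \<iota> x \<in> S" "\<And>x. x \<in> S \<Longrightarrow> \<iota> (\<iota> x) = x" "\<And>x. x \<in> S \<Longrightarrow> \<iota> x \<noteq> x"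
    and "\<And>x. x \<in> S \<Longrightarrow> g (\<iota> x) = g x" "\<And>x. x \<in> S \<Longrightarrow> d dvd g x"
  shows "2 * d dvd sum g S"
  using assms
proof (induction S rule: finite_psubset_induct)
  case (psubset S)
  show ?case
  proof (cases "S = {}")
    case False
    then obtain x where x: "x \<in> S" by auto
    let ?S' = "S - {x, \<iota> x}"
    have "sum g S = g x + g (\<iota> x) + sum g ?S'"
      using psubset.hyps(1) x psubset.prems(1,3) sum.remove[of S x g] sum.remove[of "S - {x}" "\<iota> x" g]
      by (auto simp: insert_Diff_if Diff_insert2[symmetric] add.assoc)
    also have "\<dots> = 2 * g x + sum g ?S'"
      using x psubset.prems(4) by (simp add: mult_2)
    finally have "sum g S = 2 * g x + sum g ?S'" .
    moreover have "2 * d dvd 2 * g x"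
      using x psubset.prems(5) by (simp add: mult_dvd_mono)
    moreover have "2 * d dvd sum g ?S'"
    proof (rule psubset.IH)
      show "?S' \<subset> S"
        using x by auto
      fix y assume y: "y \<in> ?S'"
      then have "\<iota> y \<noteq> x" "\<iota> y \<noteq> \<iota> x"
        using x psubset.prems(2) by (metis DiffE insertCI)+
      then show "\<iota> y \<in> ?S'"
        using y psubset.prems(1) by auto
    qed (use psubset.hyps psubset.prems in auto)
    ultimately show ?thesis by simp
  qed simp
qed

lemma dvd_sum_complement_pairs:
  fixes G :: "'a set \<Rightarrow> int"
  assumes fin: "finite I" and card: "card I = 2 * M" and "0 < M"
    and even: "even (card {i\<in>I. P i})"
    and G: "\<And>T. T \<subseteq> I \<Longrightarrow> card T = M \<Longrightarrow> 2 ^ (M - 1) dvd G T"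
  shows "2 ^ (2 * M) dvd
    (\<Sum>R | R \<subseteq> I \<and> card R = M. ((-1) ^ card {i \<in> I - R. P i} - 1) * G R * G (I - R))"
proof -
  let ?g = "\<lambda>R. ((-1) ^ card {i \<in> I - R. P i} - 1) * G R * G (I - R)"
  have sign: "(-1::int) ^ card {i \<in> I - R. P i} = (-1) ^ card {i \<in> R. P i}" if "R \<subseteq> I" for R
  proof -
    have "card {i\<in>I. P i} = card {i \<in> R. P i} + card {i \<in> I - R. P i}"
      using fin that by (subst card_Un_disjoint[symmetric]) (auto intro: arg_cong[where f=card] finite_subset)
    with even show ?thesis
      by (simp add: minus_one_power_iff)
  qed
  have "2 * 2 ^ (2 * M - 1) dvd sum ?g {R. R \<subseteq> I \<and> card R = M}"
  proof (rule dvd_sum_involution[where \<iota>="\<lambda>R. I - R"])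
    fix R assume "R \<in> {R. R \<subseteq> I \<and> card R = M}"
    then have R: "R \<subseteq> I" "card R = M" by auto
    moreover have "card (I - R) = M"
      using R card fin by (simp add: card_Diff_subset finite_subset)
    ultimately show "I - R \<in> {R. R \<subseteq> I \<and> card R = M}" "I - (I - R) = R"
      by auto
    have "R \<noteq> {}"
      using R \<open>0 < M\<close> by auto
    then show "I - R \<noteq> R"
      by blast
    show "?g (I - R) = ?g R"
      using sign[OF \<open>R \<subseteq> I\<close>] \<open>I - (I - R) = R\<close> by simp
    have "2 dvd (-1::int) ^ card {i \<in> I - R. P i} - 1"
      by (simp add: neg_one_even_power neg_one_odd_power)
    then have "2 * 2 ^ (M - 1) * 2 ^ (M - 1) dvd ?g R"
      using G R \<open>card (I - R) = M\<close> by (intro mult_dvd_mono) auto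
    moreover have "2 * 2 ^ (M - 1) * 2 ^ (M - 1) = (2::int) ^ (2 * M - 1)"
      using \<open>0 < M\<close> by (simp flip: power_add power_Suc)
    ultimately show "2 ^ (2 * M - 1) dvd ?g R" by simp
  qed (use fin in auto)
  moreover have "2 * 2 ^ (2 * M - 1) = (2::int) ^ (2 * M)"
    using \<open>0 < M\<close> by (simp flip: power_Suc)
  ultimately show ?thesis by simp
qed

lemma xor_less_pow2:
  fixes x y :: nat
  assumes "x < 2 ^ n" "y < 2 ^ n"
  shows "xor x y < 2 ^ n"
  using assms by (metis take_bit_nat_eq_self_iff take_bit_xor)

lemma prod_if_neg_one:
  "finite I \<Longrightarrow> (\<Prod>i\<in>I. if P i then -1 else 1) = (-1 :: 'a::comm_ring_1) ^ card {i\<in>I. P i}"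
  by (simp add: prod.If_cases Int_def conj_commute)

text \<open>\<open>walsh q x y\<close> is the entry of \<open>H(2^q)\<close> in row \<open>x + 1\<close> and column \<open>y + 1\<close>.\<close>

definition walsh :: "nat \<Rightarrow> nat \<Rightarrow> nat \<Rightarrow> int" where
  "walsh q x y = (\<Prod>k<q. if bit x k \<and> bit y k then -1 else 1)"

lemma power_bdot_eq_walsh: "(-1) ^ bdot q x y = walsh q x y"
  unfolding bdot_def walsh_def power_sum by (rule prod.cong) auto

lemma walsh_0 [simp]: "walsh 0 x y = 1"
  by (simp add: walsh_def)

lemma walsh_Suc_even: "walsh (Suc q) x (2 * y) = walsh q (x div 2) y"
  unfolding walsh_def prod.lessThan_Suc_shift by (simp add: bit_Suc bit_0)

lemma walsh_Suc_odd:
  "walsh (Suc q) x (Suc (2 * y)) = (if odd x then -1 else 1) * walsh q (x div 2) y"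
  unfolding walsh_def prod.lessThan_Suc_shift by (simp add: bit_Suc bit_0)

lemma walsh_xor_pow2:
  assumes "k < q"
  shows "walsh q x (xor y (2 ^ k)) = (if bit x k then -1 else 1) * walsh q x y"
proof -
  have "walsh q x (xor y (2 ^ k)) = (\<Prod>j<q. (if j = k then (if bit x k then -1 else 1) else 1) *
          (if bit x j \<and> bit y j then -1 else 1))"
    unfolding walsh_def by (rule prod.cong) (auto simp: bit_xor_iff bit_exp_iff)
  also have "\<dots> = (if bit x k then -1 else 1) * walsh q x y"
    using assms by (simp add: walsh_def prod.distrib prod.delta)
  finally show ?thesis .
qed

lemma bit_foldr_xor:
  "distinct xs \<Longrightarrow>
    bit (foldr (\<lambda>i acc. xor (f i) acc) xs 0) k \<longleftrightarrow> odd (card {i \<in> set xs. bit (f i) k})"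
proof (induction xs)
  case (Cons a xs)
  have "{i \<in> set (a # xs). bit (f i) k} =
      (if bit (f a) k then insert a {i \<in> set xs. bit (f i) k} else {i \<in> set xs. bit (f i) k})"
    by auto
  with Cons show ?case
    by (simp add: bit_xor_iff)
qed simp

text \<open>Rows: the rows \<open>X i + 1\<close> of \<open>H(2^q)\<close>, \<open>i \<in> I\<close>; columns: every column of \<open>H(2^q)\<close>,
  repeated \<open>c\<close> times.\<close>

definition walsh_perm :: "nat \<Rightarrow> nat \<Rightarrow> ('a \<Rightarrow> nat) \<Rightarrow> 'a set \<Rightarrow> int" where
  "walsh_perm c q X I = permanent I ({..<c} \<times> {..<2 ^ q}) (\<lambda>i j. walsh q (X i) (snd j))"

definition xor_vanishes :: "'a set \<Rightarrow> ('a \<Rightarrow> nat) \<Rightarrow> bool" where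
  "xor_vanishes I X \<longleftrightarrow> (\<forall>k. even (card {i\<in>I. bit (X i) k}))"

lemma walsh_perm_eq_0:
  assumes fin: "finite I" and X: "\<forall>i\<in>I. X i < 2 ^ q" and "\<not> xor_vanishes I X"
  shows "walsh_perm c q X I = 0"
proof -
  obtain k where k: "odd (card {i\<in>I. bit (X i) k})"
    using assms(3) by (auto simp: xor_vanishes_def)
  have "k < q"
  proof (rule ccontr)
    assume "\<not> k < q"
    then have "{i\<in>I. bit (X i) k} = {}"
      using X by (metis (no_types, lifting) bit_take_bit_iff empty_Collect_eq leI take_bit_nat_eq_self_iff)
    with k show False by simp
  qed
  let ?J = "{..<c} \<times> {..<(2::nat) ^ q}"
  let ?flip = "\<lambda>j::nat \<times> nat. (fst j, xor (snd j) (2 ^ k))"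
  have "bij_betw ?flip ?J ?J"
    by (rule bij_betw_byWitness[where f'="?flip"])
       (auto simp: xor_less_pow2 \<open>k < q\<close> xor.assoc)
  then have "walsh_perm c q X I = permanent I ?J (\<lambda>i j. walsh q (X i) (snd (?flip j)))"
    unfolding walsh_perm_def by (rule permanent_reindex_cols[symmetric])
  also have "\<dots> = permanent I ?J (\<lambda>i j. (if bit (X i) k then -1 else 1) * walsh q (X i) (snd j))"
    by (rule permanent_cong) (simp add: walsh_xor_pow2 \<open>k < q\<close>)
  also have "\<dots> = - walsh_perm c q X I"
    using k fin by (simp add: permanent_scale_rows prod_if_neg_one walsh_perm_def)
  finally show ?thesis by simp
qed

lemma walsh_perm_Suc:
  assumes "finite I"
  shows "walsh_perm c (Suc q) X I =
    (\<Sum>R | R \<subseteq> I \<and> card R = c * 2 ^ q. walsh_perm c q (\<lambda>i. X i div 2) R *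
       ((-1) ^ card {i \<in> I - R. odd (X i)} * walsh_perm c q (\<lambda>i. X i div 2) (I - R)))"
proof -
  let ?J = "{..<c} \<times> {..<(2::nat) ^ q}"
  define J0 where "J0 = {j \<in> {..<c} \<times> {..<(2::nat) ^ Suc q}. even (snd j)}"
  define J1 where "J1 = {j \<in> {..<c} \<times> {..<(2::nat) ^ Suc q}. odd (snd j)}"
  let ?a = "\<lambda>i j. walsh (Suc q) (X i) (snd j)"
  let ?G = "walsh_perm c q (\<lambda>i. X i div 2)"
  have bij0: "bij_betw (\<lambda>j. (fst j, 2 * snd j)) ?J J0"
    by (rule bij_betw_byWitness[where f'="\<lambda>j. (fst j, snd j div 2)"]) (auto simp: J0_def)
  have bij1: "bij_betw (\<lambda>j. (fst j, 2 * snd j + 1)) ?J J1"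
    by (rule bij_betw_byWitness[where f'="\<lambda>j. (fst j, snd j div 2)"]) (auto simp: J1_def)
  have "{..<c} \<times> {..<2 ^ Suc q} = J0 \<union> J1" "J0 \<inter> J1 = {}" "finite J0" "finite J1"
    by (auto simp: J0_def J1_def)
  moreover have "card J0 = c * 2 ^ q"
    using bij_betw_same_card[OF bij0] by simp
  moreover have "permanent T J0 ?a = ?G T" for T
    using permanent_reindex_cols[OF bij0, of T ?a, symmetric]
    by (simp add: walsh_Suc_even walsh_perm_def)
  moreover have "permanent T J1 ?a = (-1) ^ card {i \<in> T. odd (X i)} * ?G T" if "finite T" for T
    using permanent_reindex_cols[OF bij1, of T ?a, symmetric] that
    by (simp add: walsh_Suc_odd permanent_scale_rows prod_if_neg_one walsh_perm_def)
  ultimately show ?thesis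
    using assms by (simp add: walsh_perm_def permanent_split_cols)
qed

lemma walsh_perm_double:
  assumes "finite I"
  shows "walsh_perm (2 * c) q X I =
    (\<Sum>R | R \<subseteq> I \<and> card R = c * 2 ^ q. walsh_perm c q X R * walsh_perm c q X (I - R))"
proof -
  let ?J = "{..<c} \<times> {..<(2::nat) ^ q}"
  let ?K = "{c..<2 * c} \<times> {..<(2::nat) ^ q}"
  let ?a = "\<lambda>i j. walsh q (X i) (snd j)"
  have shift: "bij_betw (\<lambda>j. (fst j + c, snd j)) ?J ?K"
    by (rule bij_betw_byWitness[where f'="\<lambda>j. (fst j - c, snd j)"]) auto
  have "permanent T ?K ?a = walsh_perm c q X T" for T
    using permanent_reindex_cols[OF shift, of T ?a, symmetric] by (simp add: walsh_perm_def)
  moreover have "{..<2 * c} \<times> {..<2 ^ q} = ?J \<union> ?K" "?J \<inter> ?K = {}"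
    by auto
  ultimately show ?thesis
    using assms by (simp add: walsh_perm_def permanent_split_cols card_cartesian_product)
qed

lemma walsh_perm_Suc_minus_double:
  assumes "finite I"
  shows "walsh_perm c (Suc q) X I - walsh_perm (2 * c) q (\<lambda>i. X i div 2) I =
    (\<Sum>R | R \<subseteq> I \<and> card R = c * 2 ^ q. ((-1) ^ card {i \<in> I - R. odd (X i)} - 1) *
       walsh_perm c q (\<lambda>i. X i div 2) R * walsh_perm c q (\<lambda>i. X i div 2) (I - R))"
  unfolding walsh_perm_Suc[OF assms] walsh_perm_double[OF assms]
  by (simp add: algebra_simps sum_subtractf)

lemma xor_vanishes_div2: "xor_vanishes I X \<Longrightarrow> xor_vanishes I (\<lambda>i. X i div 2)"
  by (simp add: xor_vanishes_def flip: bit_Suc)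

lemma walsh_perm_congruent_fact:
  assumes "finite I" "card I = 2 ^ (s + q)" "\<forall>i\<in>I. X i < 2 ^ q" "xor_vanishes I X"
  shows "2 ^ 2 ^ (s + q) dvd walsh_perm (2 ^ s) q X I - fact (2 ^ (s + q))"
  using assms
proof (induction q arbitrary: s I X)
  case 0
  have "walsh_perm (2 ^ s) 0 X I = permanent I ({..<(2::nat) ^ s} \<times> {..<1::nat}) (\<lambda>i j. 1)"
    by (simp add: walsh_perm_def)
  also have "\<dots> = fact (card I)"
    using 0 by (intro permanent_const_one) auto
  finally show ?case
    using 0 by simp
next
  case (Suc q)
  define M where "M = (2::nat) ^ (s + q)"
  define X' where "X' = (\<lambda>i. X i div 2)"
  let ?Rs = "{R. R \<subseteq> I \<and> card R = M}"
  let ?G = "walsh_perm (2 ^ s) q X'"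
  have X': "\<forall>i\<in>T. X' i < 2 ^ q" if "T \<subseteq> I" for T
    using Suc.prems(3) that by (auto simp: X'_def div_less_iff_less_mult mult.commute)
  have G: "2 ^ (M - 1) dvd ?G T" if "T \<subseteq> I" "card T = M" for T
  proof (cases "xor_vanishes T X'")
    case True
    then have "2 ^ 2 ^ (s + q) dvd ?G T - fact (2 ^ (s + q))"
      using Suc.IH[of T s X'] Suc.prems(1) X' that by (auto simp: M_def finite_subset)
    then show ?thesis
      unfolding M_def by (rule pow2_dvd_if_congruent_fact_pow2)
  next
    case False
    then have "?G T = 0"
      using X' that Suc.prems(1) by (intro walsh_perm_eq_0) (auto intro: finite_subset)
    then show ?thesis
      by simp
  qed
  have IH: "2 ^ (2 * M) dvd walsh_perm (2 ^ Suc s) q X' I - fact (2 * M)"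
    using Suc.IH[of I "Suc s" X'] Suc.prems(1,2) X'[OF order_refl] xor_vanishes_div2[OF Suc.prems(4)]
    by (simp add: M_def X'_def)
  have pairs: "2 ^ (2 * M) dvd
      (\<Sum>R\<in>?Rs. ((-1) ^ card {i \<in> I - R. odd (X i)} - 1) * ?G R * ?G (I - R))"
  proof (rule dvd_sum_complement_pairs)
    have "even (card {i \<in> I. bit (X i) 0})"
      using Suc.prems(4) by (simp add: xor_vanishes_def)
    then show "even (card {i \<in> I. odd (X i)})"
      by (simp add: bit_0)
    show "card I = 2 * M"
      using Suc.prems(2) by (simp add: M_def)
  qed (use Suc.prems(1) G in \<open>simp_all add: M_def\<close>)
  have "walsh_perm (2 ^ s) (Suc q) X I - walsh_perm (2 ^ Suc s) q X' I =
      (\<Sum>R\<in>?Rs. ((-1) ^ card {i \<in> I - R. odd (X i)} - 1) * ?G R * ?G (I - R))"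
    using walsh_perm_Suc_minus_double[OF Suc.prems(1), of "2 ^ s" q X]
    by (simp add: M_def X'_def power_add)
  then have split: "walsh_perm (2 ^ s) (Suc q) X I - fact (2 * M) =
      (\<Sum>R\<in>?Rs. ((-1) ^ card {i \<in> I - R. odd (X i)} - 1) * ?G R * ?G (I - R)) +
      (walsh_perm (2 ^ Suc s) q X' I - fact (2 * M))"
    by simp
  have "2 ^ (2 * M) dvd walsh_perm (2 ^ s) (Suc q) X I - fact (2 * M)"
    unfolding split using pairs IH by (rule dvd_add)
  then show ?case
    by (simp add: M_def)
qed

lemma xor_vanishes_if_xor_all_eq_0:
  assumes "xor_all m r = 0"
  shows "xor_vanishes {1..m} (\<lambda>i. r i - 1)"
  unfolding xor_vanishes_def
proof
  fix k
  have "bit (xor_all m r) k \<longleftrightarrow> odd (card {i \<in> set [1..<m+1]. bit (r i - 1) k})"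
    unfolding xor_all_def by (rule bit_foldr_xor) simp
  also have "set [1..<m+1] = {1..m}"
    by auto
  finally show "even (card {i \<in> {1..m}. bit (r i - 1) k})"
    using assms by simp
qed

theorem proposition6:
  fixes p :: nat and r :: "nat \<Rightarrow> nat"
  assumes "(2::nat) ^ p > 2"
    and "\<forall>i\<in>{1..2^p}. r i \<in> {1..2^p}"
    and "xor_all (2^p) r = 0"
  shows "perm (2^p) (\<lambda>i j. sylvester p (r i) j) \<noteq> 0"
proof -
  define m where "m = (2::nat) ^ p"
  define X where "X = (\<lambda>i. r i - 1)"
  have cols: "bij_betw (\<lambda>j. snd j + 1) ({..<1::nat} \<times> {..<(2::nat) ^ p}) {1..m}"
    by (rule bij_betw_byWitness[where f'="\<lambda>j. (0, j - 1)"]) (auto simp: m_def)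
  have "perm m (\<lambda>i j. sylvester p (r i) j) = permanent {1..m} {1..m} (\<lambda>i j. sylvester p (r i) j)"
    unfolding perm_def by (rule sum_permutes_eq_permanent)
  also have "\<dots> = walsh_perm 1 p X {1..m}"
    using permanent_reindex_cols[OF cols, of "{1..m}" "\<lambda>i j. walsh p (X i) (j - 1)"]
    by (simp add: walsh_perm_def sylvester_def X_def power_bdot_eq_walsh)
  finally have "perm m (\<lambda>i j. sylvester p (r i) j) = walsh_perm 1 p X {1..m}" .
  moreover have "\<forall>i\<in>{1..m}. X i < 2 ^ p"
    using assms(2) by (auto simp: X_def m_def)
  then have "2 ^ m dvd walsh_perm 1 p X {1..m} - fact m"
    using walsh_perm_congruent_fact[of "{1..m}" 0 p X] xor_vanishes_if_xor_all_eq_0[of m r] assms(3)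
    by (simp add: m_def X_def)
  ultimately show ?thesis
    using not_pow2_dvd_fact_pow2[of p] by (auto simp: m_def)
qed

end
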